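(* Let $L\subset\mathbb R^3$ be a nonclosed $b$-chord-arc curve, let $0<\alpha<1$, $p>1/\alpha$, and let $f\in C(L)$. Suppose there is a constant $c>0$ such that for every $0<\delta\le 2|L|$ there exists a function $v_\delta$ harmonic in $\Omega_\delta$ satisfying $$\left(\int_L\left(\frac{\max\nolimits_{\delta}(f-v_{\delta})(M)}{\delta^{\alpha}}\right)^p\,dm_1(M)\right)^{1/p}\le c \quad\text{and}\quad \left(\int_L\left(\delta^{1-\alpha}\,\operatorname{grad}^{\ast}_{\delta} v_{\delta}(M)\right)^p\,dm_1(M)\right)^{1/p}\le c.$$ Then $f\in\Lambda^\alpha_p(L)$.
   Context: $L$ is a nonclosed curve in $\mathbb R^3$ with endpoints $A,B$; it is $b$-chord-arc ($b\ge1$) if for all distinct $M_1,M_2\in L$ the subarc $\gamma(M_1,M_2)\subset L$ with endpoints $M_1,M_2$ satisfies $|\gamma(M_1,M_2)|\le b\|M_1M_2\|$, where $|\cdot|$ denotes length. $|L|$ is the length of $L$ and $m_1$ is arc-length measure on $L$. $B_r(M)$, $\bar B_r(M)$ denote the open and closed balls of radius $r$ centered at $M$. For $f$ on $L$, $M\in L$, $r>0$: $\Delta^{\ast}f(M,r)=\sup_{N\in\bar B_r(M)\cap L}|f(N)-f(M)|$. $\Lambda^\alpha_p(L)$ is the set of functions $f$ on $L$ with $\sup_{0<r<|L|}\left(\int_L\left(\Delta^*f(M,r)/r^\alpha\right)^p dm_1(M)\right)^{1/p}<\infty$. $\Omega_\delta=\bigcup_{M\in L}B_\delta(M)$. For $v$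 harmonic in $\Omega_\delta$ and $M\in L$, $\operatorname{grad}^*_\delta v(M)=\max_{N\in\bar B_{\delta/2}(M)}|\operatorname{grad}v(N)|$. For a function $F$ on $L$, $\max_\delta F(M)=\sup_{N\in\bar B_\delta(M)\cap L}|F(N)|$; here applied to $F=f-v_\delta$ restricted to $L$. *)

theory Defs
  imports "HOL-Analysis.Analysis"
begin

type_synonym R3 = "real ^ 3"

definition curve_length :: "(real \<Rightarrow> R3) \<Rightarrow> real \<Rightarrow> real \<Rightarrow> ennreal" where
  "curve_length \<gamma> s t =
     (SUP xn \<in> {(x, n). x 0 = s \<and> x n = t \<and> (\<forall>i<n. x i \<le> x (Suc i))}.
        ennreal (\<Sum>i<snd xn. dist (\<gamma> (fst xn i)) (\<gamma> (fst xn (Suc i)))))"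

definition arclength_param :: "(real \<Rightarrow> R3) \<Rightarrow> real \<Rightarrow> bool" where
  "arclength_param \<gamma> l \<longleftrightarrow> 0 < l \<and> continuous_on {0..l} \<gamma> \<and> inj_on \<gamma> {0..l} \<and>
     (\<forall>s t. 0 \<le> s \<and> s \<le> t \<and> t \<le> l \<longrightarrow> curve_length \<gamma> s t = ennreal (t - s))"

definition chord_arc :: "real \<Rightarrow> (real \<Rightarrow> R3) \<Rightarrow> real \<Rightarrow> bool" where
  "chord_arc b \<gamma> l \<longleftrightarrow> (\<forall>s t. 0 \<le> s \<and> s < t \<and> t \<le> l \<longrightarrow>
       curve_length \<gamma> s t \<le> ennreal (b * dist (\<gamma> s) (\<gamma> t)))"

text \<open>Integral over L with respect to arc-length measure m_1 (of a nonnegative function).\<close>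
definition int_L :: "(real \<Rightarrow> R3) \<Rightarrow> real \<Rightarrow> (R3 \<Rightarrow> real) \<Rightarrow> ennreal" where
  "int_L \<gamma> l g = (\<integral>\<^sup>+ s\<in>{0..l}. ennreal (g (\<gamma> s)) \<partial>lborel)"

definition Delta_star :: "(R3 \<Rightarrow> real) \<Rightarrow> R3 set \<Rightarrow> R3 \<Rightarrow> real \<Rightarrow> real" where
  "Delta_star f L M r = (SUP N \<in> cball M r \<inter> L. \<bar>f N - f M\<bar>)"

definition Lambda :: "real \<Rightarrow> real \<Rightarrow> (real \<Rightarrow> R3) \<Rightarrow> real \<Rightarrow> (R3 \<Rightarrow> real) \<Rightarrow> bool" where
  "Lambda \<alpha> p \<gamma> l f \<longleftrightarrow> (\<exists>C. \<forall>r. 0 < r \<and> r < l \<longrightarrow>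
      int_L \<gamma> l (\<lambda>M. (Delta_star f (\<gamma> ` {0..l}) M r / r powr \<alpha>) powr p) \<le> ennreal C)"

definition Omega :: "R3 set \<Rightarrow> real \<Rightarrow> R3 set" where
  "Omega L \<delta> = (\<Union>M\<in>L. ball M \<delta>)"

definition partial_deriv :: "3 \<Rightarrow> (R3 \<Rightarrow> real) \<Rightarrow> R3 \<Rightarrow> real" where
  "partial_deriv i v x = frechet_derivative v (at x) (axis i 1)"

definition grad :: "(R3 \<Rightarrow> real) \<Rightarrow> R3 \<Rightarrow> R3" where
  "grad v x = (\<chi> i. partial_deriv i v x)"

definition harmonic_on :: "R3 set \<Rightarrow> (R3 \<Rightarrow> real) \<Rightarrow> bool" where
  "harmonic_on S v \<longleftrightarrow> open S \<and>
     (\<forall>x\<in>S. v differentiable (at x)) \<and>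
     (\<forall>i. \<forall>x\<in>S. partial_deriv i v differentiable (at x)) \<and>
     (\<forall>i j. continuous_on S (partial_deriv j (partial_deriv i v))) \<and>
     (\<forall>x\<in>S. (\<Sum>i\<in>UNIV. partial_deriv i (partial_deriv i v) x) = 0)"

definition grad_star :: "real \<Rightarrow> (R3 \<Rightarrow> real) \<Rightarrow> R3 \<Rightarrow> real" where
  "grad_star \<delta> v M = (SUP N \<in> cball M (\<delta>/2). norm (grad v N))"

definition max_delta :: "real \<Rightarrow> R3 set \<Rightarrow> (R3 \<Rightarrow> real) \<Rightarrow> R3 \<Rightarrow> real" where
  "max_delta \<delta> L F M = (SUP N \<in> cball M \<delta> \<inter> L. \<bar>F N\<bar>)"

end

theory Submission
  imports Defs
begin

(* Fix 0 < r < |L|, put delta = 2 r and let v be the harmonic approximant for delta. For M, N on L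
   with |N - M| <= r, the mean value theorem on the segment [M, N], which lies in the closed r-ball
   around M and hence in Omega_delta, gives
     |f N - f M| <= |f - v| N + |v N - v M| + |f - v| M <= 2 max_delta (f - v) M + r grad*_delta v M.
   Dividing by r^alpha = (delta/2)^alpha and using (x + y)^p <= 2^p (x^p + y^p) bounds
   (Delta* f (M, r) / r^alpha)^p by 8^p times the sum of the two integrands of the hypothesis, so its
   integral over L is at most 2 * 8^p * c^p, uniformly in r. *)

lemma frechet_derivative_eq_inner_grad:
  fixes v :: "R3 \<Rightarrow> real"
  assumes "v differentiable (at x)"
  shows "frechet_derivative v (at x) h = grad v x \<bullet> h"
proof -
  let ?D = "frechet_derivative v (at x)"
  have "linear ?D"
    using assms frechet_derivative_works has_derivative_linear by blast
  have "?D h = ?D (\<Sum>i\<in>UNIV. h $ i *\<^sub>R axis i 1)"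
    using basis_expansion[of h] by (simp add: scalar_mult_eq_scaleR)
  also have "\<dots> = (\<Sum>i\<in>UNIV. h $ i * ?D (axis i 1))"
    using \<open>linear ?D\<close> by (simp add: linear_sum linear_scale)
  finally show ?thesis
    by (simp add: grad_def partial_deriv_def inner_vec_def mult.commute)
qed

lemma abs_diff_le_of_grad_bound_on_segment:
  fixes v :: "R3 \<Rightarrow> real"
  assumes cont: "continuous_on (closed_segment M N) v"
    and diff: "\<And>x. x \<in> open_segment M N \<Longrightarrow> v differentiable (at x)"
    and bound: "\<And>x. x \<in> open_segment M N \<Longrightarrow> norm (grad v x) \<le> B"
  shows "\<bar>v N - v M\<bar> \<le> B * dist M N"
proof (cases "M = N")
  case False
  define seg where "seg t = (1 - t) *\<^sub>R M + t *\<^sub>R N" for t :: real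
  have seg_open: "seg t \<in> open_segment M N" if "0 < t" "t < 1" for t
    using False that by (auto simp: seg_def in_segment)
  have "continuous_on {0..1} (v \<circ> seg)"
    by (rule continuous_on_compose, unfold seg_def, intro continuous_intros)
      (auto simp: closed_segment_def intro!: continuous_on_subset[OF cont])
  moreover have "((v \<circ> seg) has_derivative
      (\<lambda>s. frechet_derivative v (at (seg t)) (s *\<^sub>R (N - M)))) (at t)" if "0 < t" "t < 1" for t
  proof -
    have "(seg has_derivative (\<lambda>s. s *\<^sub>R (N - M))) (at t)"
      unfolding seg_def by (auto intro!: derivative_eq_intros simp: algebra_simps)
    then show ?thesis
      using diff[OF seg_open[OF that]] by (auto dest: diff_chain_at simp: frechet_derivative_works o_def)
  qed
  ultimately obtain t where t: "0 < t" "t < 1"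
    and mvt: "\<bar>v N - v M\<bar> \<le> \<bar>frechet_derivative v (at (seg t)) (N - M)\<bar>"
    using mvt_general[of 0 1 "v \<circ> seg" "\<lambda>t s. frechet_derivative v (at (seg t)) (s *\<^sub>R (N - M))"]
    by (auto simp: seg_def)
  note mvt
  also have "\<dots> \<le> norm (grad v (seg t)) * norm (N - M)"
    by (simp add: frechet_derivative_eq_inner_grad diff seg_open t Cauchy_Schwarz_ineq2)
  also have "\<dots> \<le> B * dist M N"
    using bound[OF seg_open[OF t]] by (simp add: dist_norm norm_minus_commute mult_right_mono)
  finally show ?thesis .
qed simp

lemma Delta_star_le_approx_error_grad:
  fixes f v :: "R3 \<Rightarrow> real"
  assumes M: "M \<in> L" and r: "0 < r"
    and cont: "continuous_on (cball M r) v"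
    and diff: "\<And>x. x \<in> ball M r \<Longrightarrow> v differentiable (at x)"
    and approx: "\<And>N. N \<in> cball M r \<inter> L \<Longrightarrow> \<bar>f N - v N\<bar> \<le> A"
    and grad: "\<And>x. x \<in> ball M r \<Longrightarrow> norm (grad v x) \<le> B"
  shows "0 \<le> Delta_star f L M r" and "Delta_star f L M r \<le> 2 * A + r * B"
proof -
  have M_in: "M \<in> cball M r \<inter> L"
    using M r by simp
  have B_nonneg: "0 \<le> B"
    using grad[of M] r by (simp add: order_trans[OF norm_ge_zero])
  have osc: "\<bar>f N - f M\<bar> \<le> 2 * A + r * B" if N: "N \<in> cball M r \<inter> L" for N
  proof -
    have open_seg: "open_segment M N \<subseteq> ball M r"
      using N open_segment_bound1 by (fastforce simp: dist_norm norm_minus_commute)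
    have "\<bar>v N - v M\<bar> \<le> B * dist M N"
    proof (rule abs_diff_le_of_grad_bound_on_segment)
      show "continuous_on (closed_segment M N) v"
        using N M_in by (intro continuous_on_subset[OF cont] closed_segment_subset) auto
    qed (use open_seg diff grad in auto)
    also have "\<dots> \<le> r * B"
      using N B_nonneg mult_left_mono[of "dist M N" r B] by (simp add: mult.commute)
    finally show ?thesis
      using approx[OF N] approx[OF M_in] by linarith
  qed
  have bdd: "bdd_above ((\<lambda>N. \<bar>f N - f M\<bar>) ` (cball M r \<inter> L))"
    using osc by (intro bdd_aboveI2)
  show "0 \<le> Delta_star f L M r"
    unfolding Delta_star_def using cSUP_upper[OF M_in bdd] by simp
  show "Delta_star f L M r \<le> 2 * A + r * B"
    unfolding Delta_star_def by (rule cSUP_least[OF _ osc]) (use M_in in blast)+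
qed

(* Open-ball versions of max_delta and grad_star, dominated by them. Composed with continuous maps
   they are lower semicontinuous, hence Borel measurable, which is needed to split the integral
   of a sum of two such terms. *)
definition sup_on_ball :: "'a::metric_space set \<Rightarrow> ('a \<Rightarrow> real) \<Rightarrow> real \<Rightarrow> 'a \<Rightarrow> real" where
  "sup_on_ball K g \<rho> x = (SUP y \<in> ball x \<rho> \<inter> K. g y)"

lemma sup_on_ball_upper:
  assumes "y \<in> ball x \<rho> \<inter> K" "bdd_above (g ` (ball x \<rho> \<inter> K))"
  shows "g y \<le> sup_on_ball K g \<rho> x"
  unfolding sup_on_ball_def using assms by (rule cSUP_upper)

lemma sup_on_ball_le_SUP_cball:
  assumes "x \<in> K" "0 < \<rho>" "bdd_above (g ` (cball x \<rho> \<inter> K))"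
  shows "sup_on_ball K g \<rho> x \<le> (SUP y \<in> cball x \<rho> \<inter> K. g y)"
  unfolding sup_on_ball_def
proof (rule cSUP_subset_mono)
  show "ball x \<rho> \<inter> K \<noteq> {}"
    using assms centre_in_ball[of x \<rho>] by blast
qed (use assms in auto)

lemma borel_measurable_sup_on_ball:
  fixes c :: "'a::topological_space \<Rightarrow> 'b::metric_space"
  assumes c: "continuous_on UNIV c" "\<And>s. c s \<in> K" and \<rho>: "0 < \<rho>"
    and bdd: "\<And>s. bdd_above (g ` (ball (c s) \<rho> \<inter> K))"
  shows "(\<lambda>s. sup_on_ball K g \<rho> (c s)) \<in> borel_measurable borel"
  unfolding borel_measurable_iff_greater
proof
  fix a
  have ne: "ball (c s) \<rho> \<inter> K \<noteq> {}" for s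
    using c(2) \<rho> by (metis centre_in_ball disjoint_iff)
  have eq: "{s. a < sup_on_ball K g \<rho> (c s)} = (\<Union>y\<in>{y\<in>K. a < g y}. c -` ball y \<rho>)"
    unfolding sup_on_ball_def using less_cSUP_iff[OF ne bdd] by (auto simp: dist_commute)
  have "open (c -` ball y \<rho>)" for y
    using continuous_on_open_vimage[of UNIV c] c(1) by auto
  then have "open {s. a < sup_on_ball K g \<rho> (c s)}"
    unfolding eq by (intro open_UN ballI)
  then show "{s \<in> space borel. a < sup_on_ball K g \<rho> (c s)} \<in> sets borel"
    by simp
qed

lemma powr_add_le_two_powr:
  fixes x y p :: real
  assumes "0 \<le> x" "0 \<le> y" "0 \<le> p"
  shows "(x + y) powr p \<le> 2 powr p * (x powr p + y powr p)"
proof -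
  have "(x + y) powr p \<le> (2 * max x y) powr p"
    using assms by (intro powr_mono2) auto
  also have "\<dots> = 2 powr p * max x y powr p"
    using assms by (simp add: powr_mult)
  also have "\<dots> \<le> 2 powr p * (x powr p + y powr p)"
    by (intro mult_left_mono) (auto simp: max_def)
  finally show ?thesis .
qed

lemma two_scale_powr_bound:
  fixes D A B r \<alpha> p :: real
  assumes r: "0 < r" and \<alpha>: "\<alpha> \<le> 1" and p: "0 \<le> p"
    and nonneg: "0 \<le> D" "0 \<le> A" "0 \<le> B" and D: "D \<le> 2 * A + r * B"
  shows "(D / r powr \<alpha>) powr p
    \<le> 8 powr p * ((A / (2 * r) powr \<alpha>) powr p + ((2 * r) powr (1 - \<alpha>) * B) powr p)"
proof -
  define a where "a = A / (2 * r) powr \<alpha>"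
  define b where "b = (2 * r) powr (1 - \<alpha>) * B"
  have a_b: "0 \<le> a" "0 \<le> b"
    using nonneg by (simp_all add: a_def b_def)
  have "2 * A / r powr \<alpha> = 2 * 2 powr \<alpha> * a"
    using r by (simp add: a_def powr_mult)
  also have "\<dots> \<le> 2 * 2 powr 1 * a"
    using \<alpha> a_b by (intro mult_right_mono mult_left_mono powr_mono) auto
  finally have A_part: "2 * A / r powr \<alpha> \<le> 4 * a"
    by simp
  have "r * B / r powr \<alpha> = r powr (1 - \<alpha>) * B"
    using r by (simp add: powr_diff)
  also have "\<dots> \<le> b"
    unfolding b_def using r \<alpha> nonneg by (intro mult_right_mono powr_mono2) auto
  finally have B_part: "r * B / r powr \<alpha> \<le> b" .
  have "D / r powr \<alpha> \<le> (2 * A + r * B) / r powr \<alpha>"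
    using D r by (simp add: divide_right_mono)
  also have "\<dots> \<le> 4 * (a + b)"
    using A_part B_part a_b by (simp add: add_divide_distrib)
  finally have "(D / r powr \<alpha>) powr p \<le> (4 * (a + b)) powr p"
    using nonneg r p by (intro powr_mono2) auto
  also have "\<dots> = 4 powr p * (a + b) powr p"
    by (rule powr_mult)
  also have "\<dots> \<le> 4 powr p * (2 powr p * (a powr p + b powr p))"
    using a_b p by (intro mult_left_mono powr_add_le_two_powr) auto
  also have "\<dots> = 8 powr p * (a powr p + b powr p)"
    by (simp add: powr_mult[symmetric])
  finally show ?thesis
    by (simp add: a_def b_def)
qed

lemma int_L_mono:
  assumes "\<And>s. s \<in> {0..l} \<Longrightarrow> g (\<gamma> s) \<le> h (\<gamma> s)"
  shows "int_L \<gamma> l g \<le> int_L \<gamma> l h"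
  unfolding int_L_def using assms
  by (intro nn_integral_mono) (auto intro: ennreal_leI split: split_indicator)

lemma int_L_cong_param:
  assumes "\<And>s. s \<in> {0..l} \<Longrightarrow> \<gamma>' s = \<gamma> s"
  shows "int_L \<gamma>' l g = int_L \<gamma> l g"
  unfolding int_L_def using assms by (intro nn_integral_cong) (simp split: split_indicator)

lemma int_L_cmult_add:
  assumes [measurable]: "(\<lambda>s. g (\<gamma> s)) \<in> borel_measurable borel" "(\<lambda>s. h (\<gamma> s)) \<in> borel_measurable borel"
    and "\<And>M. 0 \<le> g M" "\<And>M. 0 \<le> h M" "0 \<le> k"
  shows "int_L \<gamma> l (\<lambda>M. k * (g M + h M)) = ennreal k * (int_L \<gamma> l g + int_L \<gamma> l h)"
proof -
  have "int_L \<gamma> l (\<lambda>M. k * (g M + h M))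
      = (\<integral>\<^sup>+ s \<in> {0..l}. ennreal k * (ennreal (g (\<gamma> s)) + ennreal (h (\<gamma> s))) \<partial>lborel)"
    unfolding int_L_def using assms by (simp add: ennreal_mult)
  also have "\<dots> = ennreal k * (int_L \<gamma> l g + int_L \<gamma> l h)"
    unfolding int_L_def by (simp add: mult.assoc nn_integral_cmult nn_set_integral_add)
  finally show ?thesis .
qed

lemma harmonic_onD:
  assumes "harmonic_on S v"
  shows "open S" and "\<And>x. x \<in> S \<Longrightarrow> v differentiable (at x)" and "continuous_on S (grad v)"
proof -
  show "open S" "\<And>x. x \<in> S \<Longrightarrow> v differentiable (at x)"
    using assms by (simp_all add: harmonic_on_def)
  have "continuous_on S (partial_deriv i v)" for i
    using assms unfolding harmonic_on_def
    by (meson differentiable_at_imp_differentiable_on differentiable_imp_continuous_on)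
  then show "continuous_on S (grad v)"
    unfolding grad_def by (intro continuous_on_vec_lambda)
qed

locale harmonic_approximation =
  fixes \<gamma> :: "real \<Rightarrow> R3" and l r :: real and f v :: "R3 \<Rightarrow> real"
  assumes param_cont: "continuous_on {0..l} \<gamma>" and l_nonneg: "0 \<le> l"
    and f_cont: "continuous_on (\<gamma> ` {0..l}) f"
    and harmonic: "harmonic_on (Omega (\<gamma> ` {0..l}) (2 * r)) v"
    and r_pos: "0 < r"
begin

abbreviation "L \<equiv> \<gamma> ` {0..l}"

definition error_sup :: "R3 \<Rightarrow> real" where
  "error_sup = sup_on_ball L (\<lambda>N. \<bar>f N - v N\<bar>) (2 * r)"

definition grad_sup :: "R3 \<Rightarrow> real" where
  "grad_sup = sup_on_ball UNIV (\<lambda>N. norm (grad v N)) r"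

lemma cball_subset_Omega: "M \<in> L \<Longrightarrow> cball M r \<subseteq> Omega L (2 * r)"
  unfolding Omega_def using r_pos
  by (intro order_trans[OF _ UN_upper]) (auto simp: cball_subset_ball_iff)

lemma L_subset_Omega: "L \<subseteq> Omega L (2 * r)"
  unfolding Omega_def using r_pos by (intro subsetI UN_I) auto

lemma v_continuous: "continuous_on (Omega L (2 * r)) v"
  by (rule differentiable_imp_continuous_on, rule differentiable_at_imp_differentiable_on)
    (rule harmonic_onD(2)[OF harmonic])

lemma error_bdd: "bdd_above ((\<lambda>N. \<bar>f N - v N\<bar>) ` S)" if "S \<subseteq> L"
proof -
  have "compact ((\<lambda>N. \<bar>f N - v N\<bar>) ` L)"
    by (intro compact_continuous_image continuous_intros f_cont param_cont compact_Icc
        continuous_on_subset[OF v_continuous L_subset_Omega])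
  then have "bdd_above ((\<lambda>N. \<bar>f N - v N\<bar>) ` L)"
    by (intro bounded_imp_bdd_above compact_imp_bounded)
  then show ?thesis
    using that by (rule bdd_above_mono[OF _ image_mono])
qed

lemma grad_bdd: "bdd_above ((\<lambda>N. norm (grad v N)) ` cball M r)" if "M \<in> L"
proof -
  have "compact ((\<lambda>N. norm (grad v N)) ` cball M r)"
    by (intro compact_continuous_image continuous_intros compact_cball
        continuous_on_subset[OF harmonic_onD(3)[OF harmonic] cball_subset_Omega[OF that]])
  then show ?thesis
    by (simp add: bounded_imp_bdd_above compact_imp_bounded)
qed

lemma error_sup_upper: "\<bar>f N - v N\<bar> \<le> error_sup M" if "N \<in> ball M (2 * r) \<inter> L"
  unfolding error_sup_def using that error_bdd by (intro sup_on_ball_upper) auto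

lemma grad_sup_upper: "norm (grad v N) \<le> grad_sup M" if "M \<in> L" "N \<in> ball M r"
  unfolding grad_sup_def using that grad_bdd[OF that(1)]
  by (intro sup_on_ball_upper) (auto elim: bdd_above_mono)

lemma error_sup_le_max_delta: "error_sup M \<le> max_delta (2 * r) L (\<lambda>N. f N - v N) M" if "M \<in> L"
  unfolding error_sup_def max_delta_def using that r_pos error_bdd
  by (intro sup_on_ball_le_SUP_cball) auto

lemma grad_sup_le_grad_star: "grad_sup M \<le> grad_star (2 * r) v M" if "M \<in> L"
  unfolding grad_sup_def grad_star_def using that r_pos grad_bdd[OF that]
  by (auto intro: sup_on_ball_le_SUP_cball[of _ UNIV, simplified])

lemma Delta_star_le_error_grad_sup:
  assumes "M \<in> L"
  shows "0 \<le> Delta_star f L M r" and "Delta_star f L M r \<le> 2 * error_sup M + r * grad_sup M"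
proof -
  have cont: "continuous_on (cball M r) v" and diff: "\<And>x. x \<in> ball M r \<Longrightarrow> v differentiable (at x)"
    using assms cball_subset_Omega ball_subset_cball harmonic_onD(2)[OF harmonic]
    by (blast intro: continuous_on_subset[OF v_continuous])+
  have approx: "\<bar>f N - v N\<bar> \<le> error_sup M" if "N \<in> cball M r \<inter> L" for N
    using that r_pos by (intro error_sup_upper) auto
  show "0 \<le> Delta_star f L M r" "Delta_star f L M r \<le> 2 * error_sup M + r * grad_sup M"
    using Delta_star_le_approx_error_grad[OF assms r_pos cont diff approx grad_sup_upper[OF assms]]
    by simp_all
qed

lemma error_sup_nonneg: "M \<in> L \<Longrightarrow> 0 \<le> error_sup M"
  by (rule order_trans[OF abs_ge_zero error_sup_upper]) (use r_pos in auto)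

lemma grad_sup_nonneg: "M \<in> L \<Longrightarrow> 0 \<le> grad_sup M"
  using grad_sup_upper[of M M] r_pos by (simp add: order_trans[OF norm_ge_zero])

(* gamma extended continuously to the whole line by clamping, so that integrands along it are
   Borel measurable *)
definition param_ext :: "real \<Rightarrow> R3" where
  "param_ext = ext_cont \<gamma> 0 l"

lemma param_ext:
  shows "continuous_on UNIV param_ext" and "\<And>s. param_ext s \<in> L"
    and "\<And>s. s \<in> {0..l} \<Longrightarrow> param_ext s = \<gamma> s"
proof -
  show "continuous_on UNIV param_ext"
    unfolding param_ext_def by (rule continuous_on_ext_cont) (simp add: cbox_interval param_cont)
  have "clamp 0 l s \<in> {0..l}" for s :: real
    using clamp_in_interval[of 0 l s] l_nonneg by (simp add: cbox_interval)
  then show "param_ext s \<in> L" for s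
    by (simp add: param_ext_def ext_cont_def)
  show "param_ext s = \<gamma> s" if "s \<in> {0..l}" for s
    unfolding param_ext_def by (rule ext_cont_cancel_cbox) (use that in \<open>simp add: cbox_interval\<close>)
qed

lemma int_L_param_ext: "int_L param_ext l g = int_L \<gamma> l g"
  by (rule int_L_cong_param[OF param_ext(3)])

lemma borel_measurable_sups [measurable]:
  "(\<lambda>s. error_sup (param_ext s)) \<in> borel_measurable borel"
  "(\<lambda>s. grad_sup (param_ext s)) \<in> borel_measurable borel"
proof -
  show "(\<lambda>s. error_sup (param_ext s)) \<in> borel_measurable borel"
    unfolding error_sup_def using param_ext(1,2) r_pos
    by (intro borel_measurable_sup_on_ball error_bdd) auto
  have "bdd_above ((\<lambda>N. norm (grad v N)) ` (ball (param_ext s) r \<inter> UNIV))" for s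
    using grad_bdd[OF param_ext(2)[of s]] by (rule bdd_above_mono) auto
  then show "(\<lambda>s. grad_sup (param_ext s)) \<in> borel_measurable borel"
    unfolding grad_sup_def using param_ext(1,2) r_pos
    by (intro borel_measurable_sup_on_ball) auto
qed

lemma int_L_Delta_star_le:
  assumes \<alpha>: "\<alpha> \<le> 1" and p: "0 \<le> p"
    and error: "int_L \<gamma> l (\<lambda>M. (max_delta (2 * r) L (\<lambda>N. f N - v N) M / (2 * r) powr \<alpha>) powr p) \<le> C"
    and grad: "int_L \<gamma> l (\<lambda>M. ((2 * r) powr (1 - \<alpha>) * grad_star (2 * r) v M) powr p) \<le> C"
  shows "int_L \<gamma> l (\<lambda>M. (Delta_star f L M r / r powr \<alpha>) powr p) \<le> ennreal (2 * 8 powr p) * C"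
proof -
  define a where "a M = (error_sup M / (2 * r) powr \<alpha>) powr p" for M
  define b where "b M = ((2 * r) powr (1 - \<alpha>) * grad_sup M) powr p" for M
  have pointwise: "(Delta_star f L M r / r powr \<alpha>) powr p \<le> 8 powr p * (a M + b M)" if "M \<in> L" for M
    unfolding a_def b_def
    using r_pos \<alpha> p Delta_star_le_error_grad_sup(1)[OF that] error_sup_nonneg[OF that] grad_sup_nonneg[OF that]
      Delta_star_le_error_grad_sup(2)[OF that]
    by (rule two_scale_powr_bound)
  have "int_L \<gamma> l (\<lambda>M. (Delta_star f L M r / r powr \<alpha>) powr p) \<le> int_L \<gamma> l (\<lambda>M. 8 powr p * (a M + b M))"
    by (rule int_L_mono) (simp add: pointwise)
  also have "\<dots> = ennreal (8 powr p) * (int_L \<gamma> l a + int_L \<gamma> l b)"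
    unfolding int_L_param_ext[symmetric] by (rule int_L_cmult_add) (simp_all add: a_def b_def)
  also have "\<dots> \<le> ennreal (8 powr p) * (C + C)"
  proof -
    have "int_L \<gamma> l a \<le> C"
      unfolding a_def using error_sup_le_max_delta error_sup_nonneg p
      by (intro order_trans[OF int_L_mono error]) (auto intro!: powr_mono2 divide_right_mono)
    moreover have "int_L \<gamma> l b \<le> C"
      unfolding b_def using grad_sup_le_grad_star grad_sup_nonneg p
      by (intro order_trans[OF int_L_mono grad]) (auto intro!: powr_mono2 mult_left_mono)
    ultimately show ?thesis
      by (intro mult_left_mono add_mono) auto
  qed
  also have "\<dots> = ennreal (2 * 8 powr p) * C"
    by (simp add: ennreal_mult ac_simps flip: mult_2)
  finally show ?thesis .
qed

end

theorem theorem2: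
  fixes \<gamma> :: "real \<Rightarrow> R3" and l b \<alpha> p :: real and f :: "R3 \<Rightarrow> real"
  assumes "arclength_param \<gamma> l"
    and "b \<ge> 1" and "chord_arc b \<gamma> l"
    and "0 < \<alpha>" and "\<alpha> < 1" and "p > 1 / \<alpha>"
    and "continuous_on (\<gamma> ` {0..l}) f"
    and "\<exists>c>0. \<forall>\<delta>. 0 < \<delta> \<and> \<delta> \<le> 2 * l \<longrightarrow>
           (\<exists>v. harmonic_on (Omega (\<gamma> ` {0..l}) \<delta>) v \<and>
              int_L \<gamma> l (\<lambda>M. (max_delta \<delta> (\<gamma> ` {0..l}) (\<lambda>N. f N - v N) M / \<delta> powr \<alpha>) powr p)
                \<le> ennreal (c powr p) \<and>
              int_L \<gamma> l (\<lambda>M. (\<delta> powr (1 - \<alpha>) * grad_star \<delta> v M) powr p)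
                \<le> ennreal (c powr p))"
  shows "Lambda \<alpha> p \<gamma> l f"
proof -
  have l: "0 \<le> l" "continuous_on {0..l} \<gamma>"
    using assms(1) by (auto simp: arclength_param_def)
  have "0 < 1 / \<alpha>"
    using assms(4) by simp
  with assms(6) have p: "0 \<le> p"
    by linarith
  obtain c where c: "\<forall>\<delta>. 0 < \<delta> \<and> \<delta> \<le> 2 * l \<longrightarrow> (\<exists>v. harmonic_on (Omega (\<gamma> ` {0..l}) \<delta>) v \<and>
      int_L \<gamma> l (\<lambda>M. (max_delta \<delta> (\<gamma> ` {0..l}) (\<lambda>N. f N - v N) M / \<delta> powr \<alpha>) powr p)
        \<le> ennreal (c powr p) \<and>
      int_L \<gamma> l (\<lambda>M. (\<delta> powr (1 - \<alpha>) * grad_star \<delta> v M) powr p) \<le> ennreal (c powr p))"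
    using assms(8) by blast
  have "int_L \<gamma> l (\<lambda>M. (Delta_star f (\<gamma> ` {0..l}) M r / r powr \<alpha>) powr p)
      \<le> ennreal (2 * 8 powr p * c powr p)" if r: "0 < r" "r < l" for r
  proof -
    obtain v where v: "harmonic_on (Omega (\<gamma> ` {0..l}) (2 * r)) v"
      and error: "int_L \<gamma> l (\<lambda>M. (max_delta (2 * r) (\<gamma> ` {0..l}) (\<lambda>N. f N - v N) M
          / (2 * r) powr \<alpha>) powr p) \<le> ennreal (c powr p)"
      and grad: "int_L \<gamma> l (\<lambda>M. ((2 * r) powr (1 - \<alpha>) * grad_star (2 * r) v M) powr p)
          \<le> ennreal (c powr p)"
      using c[rule_format, of "2 * r"] r by auto
    interpret harmonic_approximation \<gamma> l r f v
      using l v r assms(7) by unfold_locales auto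
    show ?thesis
      using int_L_Delta_star_le[OF _ p error grad] assms(5) by (simp add: ennreal_mult)
  qed
  then show ?thesis
    unfolding Lambda_def by blast
qed

end
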